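(* Fix constants $0\le\delta\le1$, $\gamma>0$, $M>0$, $\alpha>1$. There is a constant $X_0$ (depending only on these fixed constants, not on $E,P,Q$) such that the following holds. Let $E/\mathbb{Q}$ be given by the model $y^2=x^3+Ax+B$ ($A,B\in\mathbb{Z}$) described in the context, with $X=\max\{|A|^3,|B|^2\}\ge X_0$. Let $P,Q\in E(\mathbb{Q})$ satisfy $X^{1/6}\le x(P)<x(Q)$, $x(P)=x_1/s$, $x(Q)=x_2/s$ with $x_1,x_2\in\mathbb{Z}$, $s$ a positive integer, $\gcd(x_1,s)\le s^\delta$, $\gcd(x_2,s)\le s^\delta$, and $$h(s)\le\tfrac1\gamma\log X,\qquad \hat{h}(P),\hat{h}(Q)>M\log X,\qquad \max\Big\{\tfrac{\hat{h}(Q)}{\hat{h}(P)},\tfrac{\hat{h}(P)}{\hat{h}(Q)}\Big\}\le\alpha.$$ Then $$\cos\theta_{P,Q}\le \frac{\sqrt\alpha}{2}+\frac{3\delta}{2M\gamma}+\frac1M.$$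
   Context: The model is obtained from a global minimal Weierstrass equation of $E$ by the substitution $x\mapsto \frac{1}{36}(x-3b_2)$, $y\mapsto \frac12(\frac{y}{108}-\frac{a_1}{36}(x-3b_2)-a_3)$. $h$ is the absolute logarithmic Weil height, $h(P)=h(x(P))$, $\hat{h}(P)=\lim_{n\to\infty}h(2^nP)/4^n$ (not normalized by $1/2$). For non-torsion $P,Q\in E(\mathbb{Q})$, $\cos\theta_{P,Q}:=\dfrac{\hat{h}(P+Q)-\hat{h}(P)-\hat{h}(Q)}{2\sqrt{\hat{h}(P)\hat{h}(Q)}}$. *)

theory Defs
  imports Complex_Main
begin

definition wb2 :: "'a::comm_ring_1 \<Rightarrow> 'a \<Rightarrow> 'a \<Rightarrow> 'a \<Rightarrow> 'a \<Rightarrow> 'a" where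
  "wb2 a1 a2 a3 a4 a6 = a1^2 + 4*a2"
definition wb4 :: "'a::comm_ring_1 \<Rightarrow> 'a \<Rightarrow> 'a \<Rightarrow> 'a \<Rightarrow> 'a \<Rightarrow> 'a" where
  "wb4 a1 a2 a3 a4 a6 = 2*a4 + a1*a3"
definition wb6 :: "'a::comm_ring_1 \<Rightarrow> 'a \<Rightarrow> 'a \<Rightarrow> 'a \<Rightarrow> 'a \<Rightarrow> 'a" where
  "wb6 a1 a2 a3 a4 a6 = a3^2 + 4*a6"
definition wb8 :: "'a::comm_ring_1 \<Rightarrow> 'a \<Rightarrow> 'a \<Rightarrow> 'a \<Rightarrow> 'a \<Rightarrow> 'a" where
  "wb8 a1 a2 a3 a4 a6 = a1^2*a6 + 4*a2*a6 - a1*a3*a4 + a2*a3^2 - a4^2"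
definition wc4 :: "'a::comm_ring_1 \<Rightarrow> 'a \<Rightarrow> 'a \<Rightarrow> 'a \<Rightarrow> 'a \<Rightarrow> 'a" where
  "wc4 a1 a2 a3 a4 a6 = (wb2 a1 a2 a3 a4 a6)^2 - 24 * wb4 a1 a2 a3 a4 a6"
definition wc6 :: "'a::comm_ring_1 \<Rightarrow> 'a \<Rightarrow> 'a \<Rightarrow> 'a \<Rightarrow> 'a \<Rightarrow> 'a" where
  "wc6 a1 a2 a3 a4 a6 = - ((wb2 a1 a2 a3 a4 a6)^3)
     + 36 * wb2 a1 a2 a3 a4 a6 * wb4 a1 a2 a3 a4 a6 - 216 * wb6 a1 a2 a3 a4 a6"
definition wdisc :: "'a::comm_ring_1 \<Rightarrow> 'a \<Rightarrow> 'a \<Rightarrow> 'a \<Rightarrow> 'a \<Rightarrow> 'a" where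
  "wdisc a1 a2 a3 a4 a6 =
     - ((wb2 a1 a2 a3 a4 a6)^2) * wb8 a1 a2 a3 a4 a6 - 8 * (wb4 a1 a2 a3 a4 a6)^3
     - 27 * (wb6 a1 a2 a3 a4 a6)^2
     + 9 * wb2 a1 a2 a3 a4 a6 * wb4 a1 a2 a3 a4 a6 * wb6 a1 a2 a3 a4 a6"

text \<open>Coefficients after the change of variables x = u^2 x' + r, y = u^3 y' + s u^2 x' + t
  (Silverman, Table 3.1).\<close>
definition wchange :: "rat \<Rightarrow> rat \<Rightarrow> rat \<Rightarrow> rat \<Rightarrow> rat \<times> rat \<times> rat \<times> rat \<times> rat
    \<Rightarrow> rat \<times> rat \<times> rat \<times> rat \<times> rat" where
  "wchange u r s t c = (case c of (a1, a2, a3, a4, a6) \<Rightarrow>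
     ((a1 + 2*s) / u,
      (a2 - s*a1 + 3*r - s^2) / u^2,
      (a3 + r*a1 + 2*t) / u^3,
      (a4 - s*a3 + 2*r*a2 - (t + r*s)*a1 + 3*r^2 - 2*s*t) / u^4,
      (a6 + r*a4 + r^2*a2 + r^3 - t*a3 - t^2 - r*t*a1) / u^6))"

definition wdisc_tuple :: "rat \<times> rat \<times> rat \<times> rat \<times> rat \<Rightarrow> rat" where
  "wdisc_tuple c = (case c of (a1, a2, a3, a4, a6) \<Rightarrow> wdisc a1 a2 a3 a4 a6)"

definition integral_tuple :: "rat \<times> rat \<times> rat \<times> rat \<times> rat \<Rightarrow> bool" where
  "integral_tuple c = (case c of (a1, a2, a3, a4, a6) \<Rightarrow>
     a1 \<in> \<int> \<and> a2 \<in> \<int> \<and> a3 \<in> \<int> \<and> a4 \<in> \<int> \<and> a6 \<in> \<int>)"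

definition global_minimal :: "int \<Rightarrow> int \<Rightarrow> int \<Rightarrow> int \<Rightarrow> int \<Rightarrow> bool" where
  "global_minimal a1 a2 a3 a4 a6 \<longleftrightarrow>
     wdisc a1 a2 a3 a4 a6 \<noteq> 0 \<and>
     (\<forall>u r s t :: rat. u \<noteq> 0 \<longrightarrow>
        integral_tuple (wchange u r s t (of_int a1, of_int a2, of_int a3, of_int a4, of_int a6)) \<longrightarrow>
        \<bar>of_int (wdisc a1 a2 a3 a4 a6)\<bar>
          \<le> \<bar>wdisc_tuple (wchange u r s t (of_int a1, of_int a2, of_int a3, of_int a4, of_int a6))\<bar>)"

text \<open>None is the point at infinity; Some (x, y) is an affine point.\<close>
type_synonym qpoint = "(rat \<times> rat) option"

definition on_curve :: "int \<Rightarrow> int \<Rightarrow> qpoint \<Rightarrow> bool" where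
  "on_curve A B P = (case P of None \<Rightarrow> True
     | Some (x, y) \<Rightarrow> y^2 = x^3 + of_int A * x + of_int B)"

definition ec_add :: "int \<Rightarrow> qpoint \<Rightarrow> qpoint \<Rightarrow> qpoint" where
  "ec_add A P Q = (case P of None \<Rightarrow> Q | Some (x1, y1) \<Rightarrow>
     (case Q of None \<Rightarrow> P | Some (x2, y2) \<Rightarrow>
        (if x1 = x2 \<and> y1 = - y2 then None
         else let l = (if x1 = x2 then (3 * x1^2 + of_int A) / (2 * y1)
                       else (y2 - y1) / (x2 - x1));
                  x3 = l^2 - x1 - x2;
                  y3 = l * (x1 - x3) - y1
              in Some (x3, y3))))"

definition weil_h :: "rat \<Rightarrow> real" where
  "weil_h q = (case quotient_of q of (n, d) \<Rightarrow> ln (real_of_int (max \<bar>n\<bar> \<bar>d\<bar>)))"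

definition pt_h :: "qpoint \<Rightarrow> real" where
  "pt_h P = (case P of None \<Rightarrow> 0 | Some (x, y) \<Rightarrow> weil_h x)"

text \<open>Canonical height (not normalised by 1/2): lim h(2^n P) / 4^n.\<close>
definition can_h :: "int \<Rightarrow> qpoint \<Rightarrow> real" where
  "can_h A P = lim (\<lambda>n. pt_h (((\<lambda>R. ec_add A R R) ^^ n) P) / 4 ^ n)"

definition cos_theta :: "int \<Rightarrow> qpoint \<Rightarrow> qpoint \<Rightarrow> real" where
  "cos_theta A P Q = (can_h A (ec_add A P Q) - can_h A P - can_h A Q)
                       / (2 * sqrt (can_h A P * can_h A Q))"

end

theory Submission
  imports Defs
begin

text \<open>
  Write W = X^(1/6), so that |A| <= W^2 and |B| <= W^3. For a point R, x(2R) is the quotient of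
  the duplication forms, whose values at a reduced fraction x(R) = a/d are bounded by 12 W^4
  max(|a|,d)^4, and whose common divisors divide the resultant 4(4A^3 + 27B^2); hence
  h(2R) - 4 h(R) lies between -ln(1000 W^10) and ln(12 W^4). Tate's telescoping sum turns this into
  h(R) - (5/9) ln X - O(1) <= hat h(R) <= h(R) + (2/9) ln X + O(1).

  Since x(P) and x(Q) share the denominator s, the chord gives x(P + Q) = N / (s (x2 - x1)^2) with
  |N| <= 12 x1 x2^2, so h(P + Q) <= ln 12 + ln x1 + 2 ln x2, while the gcd hypotheses give
  ln x_i <= h(x_i / s) + delta ln s <= h(x_i / s) + (delta / gamma) ln X. Together,
  hat h(P + Q) - hat h(P) - hat h(Q) <= hat h(Q) + (2 + 3 delta / gamma) ln X for large X, and
  dividing by 2 sqrt(hat h(P) hat h(Q)) > 2 M ln X, with hat h(Q) <= sqrt(alpha hat h(P) hat h(Q)),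
  gives the bound.
\<close>

lemma weil_h_of_int_div:
  fixes n d :: int
  assumes "d \<noteq> 0"
  shows "weil_h (of_int n / of_int d) = ln (real_of_int (max \<bar>n\<bar> \<bar>d\<bar>) / real_of_int (gcd n d))"
proof -
  define g where "g = gcd n d"
  have "g > 0" using assms by (simp add: g_def)
  \<comment> \<open>Rat.normalize divides by gcd n d or by - gcd n d, according to the sign of d.\<close>
  have quot: "quotient_of (of_int n / of_int d) = Rat.normalize (n, d)"
    by (simp add: quotient_of_Fract Fract_of_int_quotient[symmetric])
  have reduced: "real_of_int (max \<bar>n div c\<bar> \<bar>d div c\<bar>) = real_of_int (max \<bar>n\<bar> \<bar>d\<bar>) / real_of_int g"
    if "c = g \<or> c = - g" for c
  proof -
    have "c dvd n" "c dvd d" using that by (auto simp: g_def)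
    then have "real_of_int \<bar>n div c\<bar> = real_of_int \<bar>n\<bar> / real_of_int g"
      and "real_of_int \<bar>d div c\<bar> = real_of_int \<bar>d\<bar> / real_of_int g"
      using that \<open>g > 0\<close> by (auto simp: of_int_div abs_divide)
    then show ?thesis
      using \<open>g > 0\<close> by (simp add: of_int_max max_divide_distrib_right)
  qed
  show ?thesis
  proof (cases "d > 0")
    case True
    then show ?thesis
      using reduced[of g] by (simp add: weil_h_def quot Rat.normalize_def Let_def g_def)
  next
    case False
    then show ?thesis
      using assms reduced[of "- g"] by (simp add: weil_h_def quot Rat.normalize_def Let_def g_def)
  qed
qed

lemma weil_h_of_int_div_le:
  fixes n d :: int
  assumes "d \<noteq> 0"
  shows "weil_h (of_int n / of_int d) \<le> ln (real_of_int (max \<bar>n\<bar> \<bar>d\<bar>))"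
proof -
  define m where "m = real_of_int (max \<bar>n\<bar> \<bar>d\<bar>)"
  have "1 \<le> real_of_int (gcd n d)" "0 < m"
    using assms by (auto simp: m_def int_one_le_iff_zero_less order_le_neq_trans)
  then have "m / real_of_int (gcd n d) \<le> m" "0 < m / real_of_int (gcd n d)"
    by (auto simp: divide_le_eq zero_less_divide_iff)
  then show ?thesis
    by (simp add: weil_h_of_int_div[OF assms] m_def)
qed

lemma weil_h_quotient_of:
  assumes "quotient_of q = (a, d)"
  shows "weil_h q = ln (real_of_int (max \<bar>a\<bar> d))"
  using assms quotient_of_denom_pos[OF assms] by (simp add: weil_h_def)

lemma weil_h_of_int: "s > 0 \<Longrightarrow> weil_h (of_int s) = ln (real_of_int s)"
  using weil_h_of_int_div[where n = s and d = 1] by simp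

lemma weil_h_nonneg: "0 \<le> weil_h q"
proof -
  obtain a d where q: "quotient_of q = (a, d)" by (cases "quotient_of q")
  then have "0 < d" by (rule quotient_of_denom_pos)
  then show ?thesis by (simp add: weil_h_quotient_of[OF q])
qed

lemma ln_numerator_le_weil_h:
  fixes x s :: int and \<delta> :: real
  assumes "0 < s" "s \<le> x" and gcd: "real_of_int (gcd x s) \<le> real_of_int s powr \<delta>"
  shows "ln (real_of_int x) \<le> weil_h (of_int x / of_int s) + \<delta> * ln (real_of_int s)"
proof -
  have "0 < gcd x s" using assms by simp
  have "weil_h (of_int x / of_int s) = ln (real_of_int x) - ln (real_of_int (gcd x s))"
    using weil_h_of_int_div[of s x] assms \<open>0 < gcd x s\<close> by (simp add: ln_div max_def)
  moreover have "ln (real_of_int (gcd x s)) \<le> \<delta> * ln (real_of_int s)"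
    using ln_mono[OF gcd] \<open>0 < gcd x s\<close> \<open>0 < s\<close> by (simp add: ln_powr)
  ultimately show ?thesis by simp
qed

lemma ec_add_self_Some:
  assumes "y \<noteq> 0"
  shows "ec_add A (Some (x, y)) (Some (x, y)) =
    (let l = (3 * x^2 + of_int A) / (2 * y); x' = l^2 - x - x in Some (x', l * (x - x') - y))"
  using assms by (simp add: ec_add_def Let_def)

lemma ec_add_Some_Some:
  assumes "x1 \<noteq> x2"
  shows "ec_add A (Some (x1, y1)) (Some (x2, y2)) =
    (let l = (y2 - y1) / (x2 - x1); x' = l^2 - x1 - x2 in Some (x', l * (x1 - x') - y1))"
  using assms by (simp add: ec_add_def Let_def)

lemma on_curve_ec_add_self:
  assumes "on_curve A B S"
  shows "on_curve A B (ec_add A S S)"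
proof (cases S)
  case (Some p)
  then obtain x y where S: "S = Some (x, y)" by (cases p) auto
  have curve: "y^2 = x^3 + of_int A * x + of_int B" using assms S by (simp add: on_curve_def)
  show ?thesis
  proof (cases "y = 0")
    case False
    define l where "l = (3 * x^2 + of_int A) / (2 * y)"
    have "l * (2 * y) = 3 * x^2 + of_int A" using False by (simp add: l_def)
    then have "(l * (x - (l^2 - x - x)) - y)^2 = (l^2 - x - x)^3 + of_int A * (l^2 - x - x) + of_int B"
      using curve by algebra
    then show ?thesis
      using S False by (simp add: ec_add_self_Some Let_def l_def[symmetric] on_curve_def)
  qed (simp add: S ec_add_def on_curve_def)
qed (simp add: ec_add_def on_curve_def)

lemma on_curve_ec_add:
  assumes "on_curve A B (Some (x1, y1))" "on_curve A B (Some (x2, y2))" "x1 \<noteq> x2"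
  shows "on_curve A B (ec_add A (Some (x1, y1)) (Some (x2, y2)))"
proof -
  define l where "l = (y2 - y1) / (x2 - x1)"
  have "l * (x2 - x1) = y2 - y1" using assms(3) by (simp add: l_def)
  moreover have "y1^2 = x1^3 + of_int A * x1 + of_int B" "y2^2 = x2^3 + of_int A * x2 + of_int B"
    using assms by (simp_all add: on_curve_def)
  ultimately have
    "(l * (x1 - (l^2 - x1 - x2)) - y1)^2 = (l^2 - x1 - x2)^3 + of_int A * (l^2 - x1 - x2) + of_int B"
    using assms(3) by algebra
  then show ?thesis
    using assms(3) by (simp add: ec_add_Some_Some Let_def l_def[symmetric] on_curve_def)
qed

lemma abs_add_mult_le:
  fixes f g u v K1 K2 V :: real
  assumes "\<bar>f\<bar> \<le> K1" "\<bar>g\<bar> \<le> K2" "\<bar>u\<bar> \<le> V" "\<bar>v\<bar> \<le> V"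
  shows "\<bar>f * u + g * v\<bar> \<le> (K1 + K2) * V"
proof -
  have "\<bar>f * u + g * v\<bar> \<le> \<bar>f\<bar> * \<bar>u\<bar> + \<bar>g\<bar> * \<bar>v\<bar>"
    using abs_triangle_ineq[of "f * u" "g * v"] by (simp add: abs_mult)
  also have "\<dots> \<le> K1 * V + K2 * V"
    using assms by (intro add_mono mult_mono) auto
  finally show ?thesis by (simp add: algebra_simps)
qed

lemma abs_weighted_monomial_le:
  fixes A B W :: real
  assumes "\<bar>A\<bar> \<le> W^2" "\<bar>B\<bar> \<le> W^3" "1 \<le> W" "2*i + 3*j \<le> n"
  shows "\<bar>A^i * B^j\<bar> \<le> W^n"
proof -
  have "\<bar>A^i * B^j\<bar> = \<bar>A\<bar>^i * \<bar>B\<bar>^j" by (simp add: abs_mult power_abs)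
  also have "\<dots> \<le> (W^2)^i * (W^3)^j"
    by (intro mult_mono power_mono assms) auto
  also have "\<dots> = W^(2*i + 3*j)" by (simp add: power_mult power_add)
  also have "\<dots> \<le> W^n" using assms by (intro power_increasing) auto
  finally show ?thesis .
qed

lemma abs_binary_monomial_le:
  fixes c p q r K :: real
  assumes "\<bar>p\<bar> \<le> r" "\<bar>q\<bar> \<le> r" "\<bar>c\<bar> \<le> K"
  shows "\<bar>c * (p^i * q^j)\<bar> \<le> K * r^(i + j)"
proof -
  have "\<bar>p\<bar>^i * \<bar>q\<bar>^j \<le> r^i * r^j"
    using assms by (intro mult_mono power_mono) auto
  then show ?thesis
    using assms by (auto simp: abs_mult power_abs power_add intro: mult_mono)
qed

lemma abs_binary_cubic_le:
  fixes p q r c0 c1 c2 c3 :: real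
  assumes "\<bar>p\<bar> \<le> r" "\<bar>q\<bar> \<le> r"
    and "\<bar>c0\<bar> \<le> K0" "\<bar>c1\<bar> \<le> K1" "\<bar>c2\<bar> \<le> K2" "\<bar>c3\<bar> \<le> K3"
  shows "\<bar>c0*p^3 + c1*p^2*q + c2*p*q^2 + c3*q^3\<bar> \<le> (K0 + K1 + K2 + K3) * r^3"
proof -
  note monomial = abs_binary_monomial_le[OF assms(1,2)]
  have "\<bar>c0*p^3\<bar> \<le> K0*r^3" using monomial[OF assms(3), of 3 0] by simp
  moreover have "\<bar>c1*p^2*q\<bar> \<le> K1*r^3" using monomial[OF assms(4), of 2 1] by (simp add: mult.assoc)
  moreover have "\<bar>c2*p*q^2\<bar> \<le> K2*r^3" using monomial[OF assms(5), of 1 2] by (simp add: mult.assoc power3_eq_cube)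
  moreover have "\<bar>c3*q^3\<bar> \<le> K3*r^3" using monomial[OF assms(6), of 0 3] by simp
  ultimately show ?thesis by (simp add: algebra_simps)
qed

lemma abs_binary_quartic_le:
  fixes p q r c0 c1 c2 c3 c4 :: real
  assumes "\<bar>p\<bar> \<le> r" "\<bar>q\<bar> \<le> r"
    and "\<bar>c0\<bar> \<le> K0" "\<bar>c1\<bar> \<le> K1" "\<bar>c2\<bar> \<le> K2" "\<bar>c3\<bar> \<le> K3" "\<bar>c4\<bar> \<le> K4"
  shows "\<bar>c0*p^4 + c1*p^3*q + c2*p^2*q^2 + c3*p*q^3 + c4*q^4\<bar> \<le> (K0 + K1 + K2 + K3 + K4) * r^4"
proof -
  note monomial = abs_binary_monomial_le[OF assms(1,2)]
  have "\<bar>c0*p^4\<bar> \<le> K0*r^4" using monomial[OF assms(3), of 4 0] by simp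
  moreover have "\<bar>c1*p^3*q\<bar> \<le> K1*r^4" using monomial[OF assms(4), of 3 1] by (simp add: mult.assoc)
  moreover have "\<bar>c2*p^2*q^2\<bar> \<le> K2*r^4" using monomial[OF assms(5), of 2 2] by (simp add: mult.assoc)
  moreover have "\<bar>c3*p*q^3\<bar> \<le> K3*r^4" using monomial[OF assms(6), of 1 3] by (simp add: mult.assoc)
  moreover have "\<bar>c4*q^4\<bar> \<le> K4*r^4" using monomial[OF assms(7), of 0 4] by simp
  ultimately show ?thesis by (simp add: algebra_simps)
qed

section \<open>Duplication\<close>

definition dup_num :: "'a::comm_ring_1 \<Rightarrow> 'a \<Rightarrow> 'a \<Rightarrow> 'a \<Rightarrow> 'a" where
  "dup_num A B X Z = X^4 - 2*A*X^2*Z^2 - 8*B*X*Z^3 + A^2*Z^4"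

definition dup_den :: "'a::comm_ring_1 \<Rightarrow> 'a \<Rightarrow> 'a \<Rightarrow> 'a \<Rightarrow> 'a" where
  "dup_den A B X Z = 4*Z*(X^3 + A*X*Z^2 + B*Z^3)"

lemma of_int_dup_num: "of_int (dup_num A B X Z) = dup_num (of_int A) (of_int B) (of_int X) (of_int Z)"
  by (simp add: dup_num_def)

lemma of_int_dup_den: "of_int (dup_den A B X Z) = dup_den (of_int A) (of_int B) (of_int X) (of_int Z)"
  by (simp add: dup_den_def)

lemma x_ec_add_self:
  fixes x y :: rat and a d :: int
  assumes curve: "y^2 = x^3 + of_int A * x + of_int B" and "y \<noteq> 0"
    and x: "x = of_int a / of_int d" and "d \<noteq> 0"
  shows "dup_den A B a d \<noteq> 0"
    and "\<exists>y'. ec_add A (Some (x, y)) (Some (x, y))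
                = Some (of_int (dup_num A B a d) / of_int (dup_den A B a d), y')"
proof -
  define l where "l = (3 * x^2 + of_int A) / (2 * y)"
  define f where "f = x^3 + of_int A * x + of_int B"
  have "f \<noteq> 0" using curve \<open>y \<noteq> 0\<close> by (metis f_def zero_eq_power2)
  have a: "(of_int a :: rat) = x * of_int d" using x \<open>d \<noteq> 0\<close> by simp
  have num: "of_int (dup_num A B a d) = (of_int d)^4 * ((3 * x^2 + of_int A)^2 - 8 * x * f)"
    unfolding of_int_dup_num unfolding a dup_num_def f_def by algebra
  have den: "of_int (dup_den A B a d) = (of_int d)^4 * (4 * f)"
    unfolding of_int_dup_den unfolding a dup_den_def f_def by algebra
  then show "dup_den A B a d \<noteq> 0"
    using \<open>f \<noteq> 0\<close> \<open>d \<noteq> 0\<close> by (metis mult_eq_0_iff of_int_0 of_int_eq_0_iff power_eq_0_iff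
      zero_neq_numeral)
  have "l^2 = (3 * x^2 + of_int A)^2 / (4 * f)"
    using curve by (simp add: l_def f_def power_divide power_mult_distrib)
  then have "l^2 - x - x = ((3 * x^2 + of_int A)^2 - 8 * x * f) / (4 * f)"
    using \<open>f \<noteq> 0\<close> by (simp add: field_simps)
  also have "\<dots> = of_int (dup_num A B a d) / of_int (dup_den A B a d)"
    unfolding num den using \<open>d \<noteq> 0\<close> by simp
  finally show "\<exists>y'. ec_add A (Some (x, y)) (Some (x, y))
                = Some (of_int (dup_num A B a d) / of_int (dup_den A B a d), y')"
    using \<open>y \<noteq> 0\<close> by (simp add: ec_add_self_Some Let_def l_def[symmetric])
qed

lemma dup_max_le:
  fixes A B W p q r :: real
  assumes A: "\<bar>A\<bar> \<le> W^2" and B: "\<bar>B\<bar> \<le> W^3" and W: "1 \<le> W"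
    and p: "\<bar>p\<bar> \<le> r" and q: "\<bar>q\<bar> \<le> r"
  shows "max \<bar>dup_num A B p q\<bar> \<bar>dup_den A B p q\<bar> \<le> 12 * W^4 * r^4"
proof -
  have W4: "1 \<le> W^4" "W^2 \<le> W^4" "W^3 \<le> W^4" using W by (simp_all add: power_increasing)
  have A2: "\<bar>A^2\<bar> \<le> W^4"
    using abs_weighted_monomial_le[OF A B W, of 2 0 4] by simp
  have "dup_num A B p q = 1*p^4 + 0*p^3*q + (-2*A)*p^2*q^2 + (-8*B)*p*q^3 + A^2*q^4"
    unfolding dup_num_def by algebra
  also have "\<bar>\<dots>\<bar> \<le> (W^4 + 0 + 2*W^4 + 8*W^4 + W^4) * r^4"
    using A B W4 A2 by (intro abs_binary_quartic_le[OF p q]) (auto simp: abs_mult)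
  finally have num: "\<bar>dup_num A B p q\<bar> \<le> 12 * W^4 * r^4" by simp
  have "dup_den A B p q = 0*p^4 + 4*p^3*q + 0*p^2*q^2 + (4*A)*p*q^3 + (4*B)*q^4"
    unfolding dup_den_def by algebra
  also have "\<bar>\<dots>\<bar> \<le> (0 + 4*W^4 + 0 + 4*W^4 + 4*W^4) * r^4"
    using A B W4 by (intro abs_binary_quartic_le[OF p q]) (auto simp: abs_mult)
  finally have den: "\<bar>dup_den A B p q\<bar> \<le> 12 * W^4 * r^4" by simp
  show ?thesis using num den by simp
qed

lemma dup_resultant_identities:
  fixes A B X Z :: "'a::idom"
  shows "(12*X^2*Z + 16*A*Z^3) * dup_num A B X Z
          + (- 3*X^3 + 5*A*X*Z^2 + 27*B*Z^3) * dup_den A B X Z = 4*(4*A^3 + 27*B^2) * Z^7"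
    and "((16*A^3 + 108*B^2)*X^3 + (- 4*A^2*B)*X^2*Z + (12*A^4 + 88*A*B^2)*X*Z^2
            + (12*A^3*B + 96*B^3)*Z^3) * dup_num A B X Z
          + ((A^2*B)*X^3 + (5*A^4 + 32*A*B^2)*X^2*Z + (26*A^3*B + 192*B^3)*X*Z^2
            + (- 3*A^5 - 24*A^2*B^2)*Z^3) * dup_den A B X Z = 4*(4*A^3 + 27*B^2) * X^7"
  unfolding dup_num_def dup_den_def by algebra+

lemma gcd_dup_dvd:
  fixes A B a d :: int
  assumes "coprime a d"
  shows "gcd (dup_num A B a d) (dup_den A B a d) dvd 4*(4*A^3 + 27*B^2)"
proof -
  define g where "g = gcd (dup_num A B a d) (dup_den A B a d)"
  have "g dvd 4*(4*A^3 + 27*B^2) * d^7"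
    unfolding g_def dup_resultant_identities(1)[where X = a and Z = d, symmetric]
    by (metis dvd_add dvd_mult gcd_dvd1 gcd_dvd2)
  moreover have "g dvd 4*(4*A^3 + 27*B^2) * a^7"
    unfolding g_def dup_resultant_identities(2)[where X = a and Z = d, symmetric]
    by (metis dvd_add dvd_mult gcd_dvd1 gcd_dvd2)
  ultimately have "g dvd gcd (4*(4*A^3 + 27*B^2) * d^7) (4*(4*A^3 + 27*B^2) * a^7)"
    by simp
  also have "\<dots> = \<bar>4*(4*A^3 + 27*B^2)\<bar>"
    using assms by (simp add: gcd_mult_left coprime_commute)
  finally show ?thesis by (simp add: g_def)
qed

lemma abs_dup_cofactors_le:
  fixes A B W p q r :: real
  assumes A: "\<bar>A\<bar> \<le> W^2" and B: "\<bar>B\<bar> \<le> W^3" and W: "1 \<le> W"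
    and p: "\<bar>p\<bar> \<le> r" and q: "\<bar>q\<bar> \<le> r"
  shows "\<bar>12*p^2*q + 16*A*q^3\<bar> + \<bar>- 3*p^3 + 5*A*p*q^2 + 27*B*q^3\<bar> \<le> 63 * W^10 * r^3"
    and "\<bar>(16*A^3 + 108*B^2)*p^3 + (- 4*A^2*B)*p^2*q + (12*A^4 + 88*A*B^2)*p*q^2
            + (12*A^3*B + 96*B^3)*q^3\<bar>
          + \<bar>(A^2*B)*p^3 + (5*A^4 + 32*A*B^2)*p^2*q + (26*A^3*B + 192*B^3)*p*q^2
            + (- 3*A^5 - 24*A^2*B^2)*q^3\<bar> \<le> 619 * W^10 * r^3"
proof -
  have mono: "\<bar>A^i * B^j\<bar> \<le> W^10" if "2*i + 3*j \<le> 10" for i j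
    using abs_weighted_monomial_le[OF A B W that] .
  have lin: "\<bar>k1 * (A^i1 * B^j1) + k2 * (A^i2 * B^j2)\<bar> \<le> (\<bar>k1\<bar> + \<bar>k2\<bar>) * W^10"
    if "2*i1 + 3*j1 \<le> 10" "2*i2 + 3*j2 \<le> 10" for k1 k2 i1 j1 i2 j2
    using abs_add_mult_le[OF _ _ mono[OF that(1)] mono[OF that(2)]] by simp
  have "\<bar>12*p^2*q + 16*A*q^3\<bar> = \<bar>0*p^3 + 12*p^2*q + 0*p*q^2 + (16*A)*q^3\<bar>" by simp
  also have "\<dots> \<le> (0 + 12*W^10 + 0 + 16*W^10) * r^3"
    using mono[of 1 0] mono[of 0 0] by (intro abs_binary_cubic_le[OF p q]) auto
  finally have f1: "\<bar>12*p^2*q + 16*A*q^3\<bar> \<le> 28 * W^10 * r^3" by simp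
  have "\<bar>- 3*p^3 + 5*A*p*q^2 + 27*B*q^3\<bar> = \<bar>(- 3)*p^3 + 0*p^2*q + (5*A)*p*q^2 + (27*B)*q^3\<bar>"
    by simp
  also have "\<dots> \<le> (3*W^10 + 0 + 5*W^10 + 27*W^10) * r^3"
    using mono[of 1 0] mono[of 0 1] mono[of 0 0] by (intro abs_binary_cubic_le[OF p q]) auto
  finally have g1: "\<bar>- 3*p^3 + 5*A*p*q^2 + 27*B*q^3\<bar> \<le> 35 * W^10 * r^3" by simp
  show "\<bar>12*p^2*q + 16*A*q^3\<bar> + \<bar>- 3*p^3 + 5*A*p*q^2 + 27*B*q^3\<bar> \<le> 63 * W^10 * r^3"
    using f1 g1 by simp
  have f2: "\<bar>(16*A^3 + 108*B^2)*p^3 + (- 4*A^2*B)*p^2*q + (12*A^4 + 88*A*B^2)*p*q^2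
            + (12*A^3*B + 96*B^3)*q^3\<bar> \<le> (124*W^10 + 4*W^10 + 100*W^10 + 108*W^10) * r^3"
    using lin[of 3 0 0 2 16 108] mono[of 2 1] lin[of 4 0 1 2 12 88] lin[of 3 1 0 3 12 96]
    by (intro abs_binary_cubic_le[OF p q]) auto
  have g2: "\<bar>(A^2*B)*p^3 + (5*A^4 + 32*A*B^2)*p^2*q + (26*A^3*B + 192*B^3)*p*q^2
            + (- 3*A^5 - 24*A^2*B^2)*q^3\<bar> \<le> (W^10 + 37*W^10 + 218*W^10 + 27*W^10) * r^3"
    using mono[of 2 1] lin[of 4 0 1 2 5 32] lin[of 3 1 0 3 26 192] lin[of 5 0 2 2 "-3" "-24"]
    by (intro abs_binary_cubic_le[OF p q]) auto
  show "\<bar>(16*A^3 + 108*B^2)*p^3 + (- 4*A^2*B)*p^2*q + (12*A^4 + 88*A*B^2)*p*q^2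
            + (12*A^3*B + 96*B^3)*q^3\<bar>
          + \<bar>(A^2*B)*p^3 + (5*A^4 + 32*A*B^2)*p^2*q + (26*A^3*B + 192*B^3)*p*q^2
            + (- 3*A^5 - 24*A^2*B^2)*q^3\<bar> \<le> 619 * W^10 * r^3"
    using f2 g2 by simp
qed

lemma dup_max_ge:
  fixes A B W p q r :: real
  assumes A: "\<bar>A\<bar> \<le> W^2" and B: "\<bar>B\<bar> \<le> W^3" and W: "1 \<le> W"
    and p: "\<bar>p\<bar> \<le> r" and q: "\<bar>q\<bar> \<le> r" and r: "r = \<bar>p\<bar> \<or> r = \<bar>q\<bar>"
  shows "\<bar>4*(4*A^3 + 27*B^2)\<bar> * r^4 \<le> 619 * W^10 * max \<bar>dup_num A B p q\<bar> \<bar>dup_den A B p q\<bar>"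
proof -
  define Mx where "Mx = max \<bar>dup_num A B p q\<bar> \<bar>dup_den A B p q\<bar>"
  have F: "\<bar>dup_num A B p q\<bar> \<le> Mx" and G: "\<bar>dup_den A B p q\<bar> \<le> Mx" by (simp_all add: Mx_def)
  have "0 \<le> Mx" using F by linarith
  note cofactors = abs_dup_cofactors_le[OF A B W p q]
  have "\<bar>4*(4*A^3 + 27*B^2) * q^7\<bar> \<le> 63 * W^10 * r^3 * Mx"
    unfolding dup_resultant_identities(1)[where X = p and Z = q, symmetric]
    using order_trans[OF abs_add_mult_le[OF order_refl order_refl F G]
        mult_right_mono[OF cofactors(1) \<open>0 \<le> Mx\<close>]] .
  moreover have "\<bar>4*(4*A^3 + 27*B^2) * p^7\<bar> \<le> 619 * W^10 * r^3 * Mx"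
    unfolding dup_resultant_identities(2)[where X = p and Z = q, symmetric]
    using order_trans[OF abs_add_mult_le[OF order_refl order_refl F G]
        mult_right_mono[OF cofactors(2) \<open>0 \<le> Mx\<close>]] .
  moreover have "0 \<le> W^10 * r^3 * Mx" using W p \<open>0 \<le> Mx\<close> by simp
  ultimately have "\<bar>4*(4*A^3 + 27*B^2)\<bar> * r^7 \<le> 619 * W^10 * r^3 * Mx"
    using r by (auto simp: abs_mult power_abs)
  then have scaled: "(\<bar>4*(4*A^3 + 27*B^2)\<bar> * r^4) * r^3 \<le> (619 * W^10 * Mx) * r^3"
    by (simp add: algebra_simps flip: power_add)
  show ?thesis
  proof (cases "r = 0")
    case False
    then have "0 < r^3" using p by simp
    with scaled show ?thesis unfolding Mx_def by (rule mult_right_le_imp_le)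
  next
    case True
    then show ?thesis using W \<open>0 \<le> Mx\<close> by (simp add: Mx_def)
  qed
qed

lemma weil_h_dup_le:
  fixes A B a d :: int and W :: real
  assumes A: "\<bar>real_of_int A\<bar> \<le> W^2" and B: "\<bar>real_of_int B\<bar> \<le> W^3" and W: "1 \<le> W"
    and "d > 0" and den: "dup_den A B a d \<noteq> 0"
  shows "weil_h (of_int (dup_num A B a d) / of_int (dup_den A B a d))
           \<le> 4 * ln (real_of_int (max \<bar>a\<bar> d)) + ln (12 * W^4)"
proof -
  define r where "r = real_of_int (max \<bar>a\<bar> d)"
  have "1 \<le> r" "\<bar>real_of_int a\<bar> \<le> r" "\<bar>real_of_int d\<bar> \<le> r"
    using \<open>d > 0\<close> by (auto simp: r_def)
  have "weil_h (of_int (dup_num A B a d) / of_int (dup_den A B a d))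
      \<le> ln (real_of_int (max \<bar>dup_num A B a d\<bar> \<bar>dup_den A B a d\<bar>))"
    by (rule weil_h_of_int_div_le[OF den])
  also have "real_of_int (max \<bar>dup_num A B a d\<bar> \<bar>dup_den A B a d\<bar>)
      = max \<bar>dup_num (of_int A) (of_int B) (of_int a) (of_int d)\<bar>
            \<bar>dup_den (of_int A) (of_int B) (of_int a) (of_int d :: real)\<bar>"
    by (simp only: of_int_max of_int_abs of_int_dup_num of_int_dup_den)
  also have "ln \<dots> \<le> ln (12 * W^4 * r^4)"
    using dup_max_le[OF A B W \<open>\<bar>real_of_int a\<bar> \<le> r\<close> \<open>\<bar>real_of_int d\<bar> \<le> r\<close>] den
    by (intro ln_mono) (simp_all add: of_int_dup_den[symmetric])
  also have "\<dots> = 4 * ln r + ln (12 * W^4)"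
    using \<open>1 \<le> r\<close> W by (simp add: ln_mult ln_realpow)
  finally show ?thesis by (simp add: r_def)
qed

lemma weil_h_dup_ge:
  fixes A B a d :: int and W :: real
  assumes A: "\<bar>real_of_int A\<bar> \<le> W^2" and B: "\<bar>real_of_int B\<bar> \<le> W^3" and W: "1 \<le> W"
    and disc: "4*A^3 + 27*B^2 \<noteq> 0" and "coprime a d" "d > 0" and den: "dup_den A B a d \<noteq> 0"
  shows "4 * ln (real_of_int (max \<bar>a\<bar> d))
           \<le> weil_h (of_int (dup_num A B a d) / of_int (dup_den A B a d)) + ln (1000 * W^10)"
proof -
  define F G where "F = dup_num A B a d" and "G = dup_den A B a d"
  define Mx r where "Mx = real_of_int (max \<bar>F\<bar> \<bar>G\<bar>)" and "r = real_of_int (max \<bar>a\<bar> d)"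
  define g where "g = real_of_int (gcd F G)"
  have "1 \<le> r" "\<bar>real_of_int a\<bar> \<le> r" "\<bar>real_of_int d\<bar> \<le> r"
    and "r = \<bar>real_of_int a\<bar> \<or> r = \<bar>real_of_int d\<bar>"
    using \<open>d > 0\<close> by (auto simp: r_def max_def)
  have "0 < Mx" "1 \<le> g" using den by (simp_all add: Mx_def g_def G_def int_one_le_iff_zero_less)
  have "\<bar>gcd F G\<bar> \<le> \<bar>4*(4*A^3 + 27*B^2)\<bar>"
    using gcd_dup_dvd[OF \<open>coprime a d\<close>] disc unfolding F_def G_def
    by (intro dvd_imp_le_int) simp_all
  then have "real_of_int (gcd F G) \<le> real_of_int \<bar>4*(4*A^3 + 27*B^2)\<bar>"
    by (simp only: of_int_le_iff abs_gcd_int)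
  then have "g \<le> \<bar>4*(4*real_of_int A^3 + 27*real_of_int B^2)\<bar>"
    by (simp add: g_def)
  then have "g * r^4 \<le> \<bar>4*(4*real_of_int A^3 + 27*real_of_int B^2)\<bar> * r^4"
    by (simp add: mult_right_mono)
  also have "\<dots> \<le> 619 * W^10 * Mx"
    using dup_max_ge A B W \<open>\<bar>real_of_int a\<bar> \<le> r\<close> \<open>\<bar>real_of_int d\<bar> \<le> r\<close> \<open>r = _ \<or> r = _\<close>
    unfolding Mx_def F_def G_def of_int_max of_int_abs of_int_dup_num of_int_dup_den by blast
  also have "\<dots> \<le> 1000 * W^10 * Mx" using \<open>0 < Mx\<close> W by simp
  finally have "r^4 / (1000 * W^10) \<le> Mx / g"
    using \<open>1 \<le> g\<close> W by (simp add: field_simps)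
  then have "ln (r^4 / (1000 * W^10)) \<le> ln (Mx / g)"
    using \<open>1 \<le> r\<close> W by (intro ln_mono) simp_all
  moreover have "weil_h (of_int F / of_int G) = ln (Mx / g)"
    using weil_h_of_int_div[OF den[folded G_def]] by (simp add: Mx_def g_def)
  ultimately show ?thesis
    using \<open>1 \<le> r\<close> W by (simp add: F_def G_def r_def ln_div ln_realpow)
qed

lemma quotient_of_root_monic_cubic:
  fixes A B :: int
  assumes q: "quotient_of x = (a, d)" and root: "x^3 + of_int A * x + of_int B = 0"
  shows "d = 1"
proof -
  have "d > 0" "coprime a d" using quotient_of_denom_pos[OF q] quotient_of_coprime[OF q] .
  have "(of_int a :: rat) = x * of_int d" using quotient_of_div[OF q] \<open>d > 0\<close> by simp
  then have "(of_int (a^3 + A*a*d^2 + B*d^3) :: rat) = (of_int d)^3 * (x^3 + of_int A * x + of_int B)"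
    by (simp add: power_mult_distrib power2_eq_square power3_eq_cube algebra_simps)
  then have "a^3 + A*a*d^2 + B*d^3 = 0" using root by (metis mult_zero_right of_int_eq_0_iff)
  then have "a^3 = d * (- A*a*d - B*d^2)" by algebra
  then have "d dvd a^3" by simp
  moreover have "coprime (a^3) d" using \<open>coprime a d\<close> by simp
  ultimately have "is_unit d" by (meson coprime_common_divisor dvd_refl)
  with \<open>d > 0\<close> show "d = 1" by simp
qed

lemma abs_root_cubic_le:
  fixes A B W p :: real
  assumes root: "p^3 + A*p + B = 0" and A: "\<bar>A\<bar> \<le> W^2" and B: "\<bar>B\<bar> \<le> W^3" and "0 \<le> W"
  shows "\<bar>p\<bar> \<le> 2*W"
proof (rule ccontr)
  assume "\<not> \<bar>p\<bar> \<le> 2*W"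
  then have W: "W \<le> \<bar>p\<bar>/2" and "0 < \<bar>p\<bar>" using \<open>0 \<le> W\<close> by linarith+
  have "\<bar>p\<bar>^3 = \<bar>A*p + B\<bar>"
    using root by (simp add: power_abs[symmetric] eq_neg_iff_add_eq_0[symmetric] add.assoc)
  also have "\<dots> \<le> \<bar>A\<bar>*\<bar>p\<bar> + \<bar>B\<bar>" by (metis abs_mult abs_triangle_ineq)
  also have "\<dots> \<le> W^2*\<bar>p\<bar> + W^3" using A B by (intro add_mono mult_right_mono) auto
  also have "\<dots> \<le> (\<bar>p\<bar>/2)^2*\<bar>p\<bar> + (\<bar>p\<bar>/2)^3"
    using W \<open>0 \<le> W\<close> by (intro add_mono mult_right_mono power_mono) auto
  finally have "\<bar>p\<bar>^3 \<le> 3/8 * \<bar>p\<bar>^3" by (simp add: power_divide power2_eq_square power3_eq_cube)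
  with \<open>0 < \<bar>p\<bar>\<close> show False by simp
qed

lemma pt_h_two_torsion_le:
  fixes A B :: int and W :: real
  assumes A: "\<bar>real_of_int A\<bar> \<le> W^2" and B: "\<bar>real_of_int B\<bar> \<le> W^3" and W: "1 \<le> W"
    and S: "on_curve A B (Some (x, 0))"
  shows "4 * pt_h (Some (x, 0)) \<le> ln (1000 * W^10)"
proof -
  obtain a d where q: "quotient_of x = (a, d)" by (cases "quotient_of x")
  have root: "x^3 + of_int A * x + of_int B = 0" using S by (simp add: on_curve_def)
  have "d = 1" by (rule quotient_of_root_monic_cubic[OF q root])
  then have "x = of_int a" using quotient_of_div[OF q] by simp
  then have "real_of_int a ^ 3 + real_of_int A * real_of_int a + real_of_int B = 0"
    using root by (metis of_int_0 of_int_add of_int_eq_iff of_int_mult of_int_power)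
  then have "\<bar>real_of_int a\<bar> \<le> 2*W" using A B W by (intro abs_root_cubic_le) auto
  then have m: "real_of_int (max \<bar>a\<bar> 1) \<le> 2*W" using W by simp
  have "4 * pt_h (Some (x, 0)) = ln (real_of_int (max \<bar>a\<bar> 1) ^ 4)"
    using q \<open>d = 1\<close> by (simp add: pt_h_def weil_h_quotient_of ln_realpow)
  also have "\<dots> \<le> ln ((2*W)^4)" using m by (intro ln_mono power_mono) auto
  also have "\<dots> \<le> ln (1000 * W^10)"
  proof (intro ln_mono)
    have "W^4 \<le> W^10" "0 \<le> W^4" using W by (auto intro: power_increasing)
    moreover have "(2*W)^4 = 16 * W^4" by (simp add: power_mult_distrib)
    ultimately show "(2*W)^4 \<le> 1000 * W^10" by linarith
  qed (use W in simp)
  finally show ?thesis .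
qed

lemma pt_h_ec_add_self_bounds:
  fixes A B :: int and W :: real
  assumes A: "\<bar>real_of_int A\<bar> \<le> W^2" and B: "\<bar>real_of_int B\<bar> \<le> W^3" and W: "1 \<le> W"
    and disc: "4*A^3 + 27*B^2 \<noteq> 0" and S: "on_curve A B S"
  shows "pt_h (ec_add A S S) \<le> 4 * pt_h S + ln (12 * W^4)"
    and "4 * pt_h S \<le> pt_h (ec_add A S S) + ln (1000 * W^10)"
proof -
  have "1 \<le> W^4" "1 \<le> W^10" using W by (simp_all add: one_le_power)
  then have "0 \<le> ln (12 * W^4)" "0 \<le> ln (1000 * W^10)" by (simp_all add: ln_ge_zero)
  have "pt_h (ec_add A S S) \<le> 4 * pt_h S + ln (12 * W^4) \<and>
        4 * pt_h S \<le> pt_h (ec_add A S S) + ln (1000 * W^10)"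
  proof (cases S)
    case None
    then show ?thesis using \<open>0 \<le> ln (12 * W^4)\<close> \<open>0 \<le> ln (1000 * W^10)\<close>
      by (simp add: ec_add_def pt_h_def)
  next
    case (Some P)
    then obtain x y where Sxy: "S = Some (x, y)" by (cases P) auto
    show ?thesis
    proof (cases "y = 0")
      case True
      then show ?thesis
        using Sxy S pt_h_two_torsion_le[OF A B W] \<open>0 \<le> ln (12 * W^4)\<close> weil_h_nonneg[of x]
        by (simp add: ec_add_def pt_h_def)
    next
      case False
      obtain a d where q: "quotient_of x = (a, d)" by (cases "quotient_of x")
      have "d > 0" "coprime a d" "x = of_int a / of_int d"
        using quotient_of_denom_pos[OF q] quotient_of_coprime[OF q] quotient_of_div[OF q] .
      moreover have curve: "y^2 = x^3 + of_int A * x + of_int B"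
        using S Sxy by (simp add: on_curve_def)
      ultimately have "dup_den A B a d \<noteq> 0"
        and "\<exists>y'. ec_add A S S = Some (of_int (dup_num A B a d) / of_int (dup_den A B a d), y')"
        using x_ec_add_self[OF curve False] Sxy by auto
      moreover have "pt_h S = ln (real_of_int (max \<bar>a\<bar> d))"
        using Sxy q by (simp add: pt_h_def weil_h_quotient_of)
      ultimately show ?thesis
        using weil_h_dup_le[OF A B W \<open>d > 0\<close>] weil_h_dup_ge[OF A B W disc \<open>coprime a d\<close> \<open>d > 0\<close>]
        by (auto simp: pt_h_def)
    qed
  qed
  then show "pt_h (ec_add A S S) \<le> 4 * pt_h S + ln (12 * W^4)"
    and "4 * pt_h S \<le> pt_h (ec_add A S S) + ln (1000 * W^10)" by auto
qed

section \<open>Canonical height versus naive height\<close>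

lemma sums_div_four_pow: "(\<lambda>n. c / 4 ^ Suc n) sums (c / 3 :: real)"
proof -
  have "(\<lambda>n. c/4 * (1/4::real) ^ n) sums (c/4 * (1 / (1 - 1/4)))"
    by (intro sums_mult geometric_sums) simp
  moreover have "(\<lambda>n. c/4 * (1/4::real) ^ n) = (\<lambda>n. c / 4 ^ Suc n)"
    by (simp add: power_one_over divide_simps)
  ultimately show ?thesis by simp
qed

lemma quasi_quadratic_limit_bounds:
  fixes f :: "'a \<Rightarrow> 'a" and h :: "'a \<Rightarrow> real"
  assumes closed: "\<And>S. C S \<Longrightarrow> C (f S)"
    and upper: "\<And>S. C S \<Longrightarrow> h (f S) \<le> 4 * h S + Cu"
    and lower: "\<And>S. C S \<Longrightarrow> 4 * h S \<le> h (f S) + Cl"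
    and "C R"
  shows "lim (\<lambda>n. h ((f ^^ n) R) / 4 ^ n) \<le> h R + Cu / 3"
    and "h R - Cl / 3 \<le> lim (\<lambda>n. h ((f ^^ n) R) / 4 ^ n)"
proof -
  define u where "u n = h ((f ^^ n) R) / 4 ^ n" for n
  define step where "step n = u (Suc n) - u n" for n
  have "C ((f ^^ n) R)" for n by (induction n) (simp_all add: \<open>C R\<close> closed)
  then have step_eq: "step n = (h (f ((f ^^ n) R)) - 4 * h ((f ^^ n) R)) / 4 ^ Suc n" for n
    by (simp add: step_def u_def divide_simps)
  have step_le: "step n \<le> Cu / 4 ^ Suc n" for n
    unfolding step_eq using upper[OF \<open>C ((f ^^ n) R)\<close>] by (intro divide_right_mono) auto
  have step_ge: "- Cl / 4 ^ Suc n \<le> step n" for n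
    unfolding step_eq using lower[OF \<open>C ((f ^^ n) R)\<close>] by (intro divide_right_mono) auto
  have "summable step"
  proof (rule summable_comparison_test')
    show "summable (\<lambda>n. (\<bar>Cu\<bar> + \<bar>Cl\<bar>) / 4 ^ Suc n)"
      using sums_div_four_pow sums_summable by blast
    show "norm (step n) \<le> (\<bar>Cu\<bar> + \<bar>Cl\<bar>) / 4 ^ Suc n" for n
    proof -
      have "Cu / 4 ^ Suc n \<le> \<bar>Cu\<bar> / 4 ^ Suc n" "- Cl / 4 ^ Suc n \<ge> - \<bar>Cl\<bar> / 4 ^ Suc n"
        and "0 \<le> \<bar>Cu\<bar> / 4 ^ Suc n" "0 \<le> \<bar>Cl\<bar> / 4 ^ Suc n"
        by (simp_all add: divide_right_mono)
      then show ?thesis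
        using step_le[of n] step_ge[of n] unfolding real_norm_def add_divide_distrib by linarith
    qed
  qed
  then have "(\<lambda>n. u 0 + (\<Sum>k<n. step k)) \<longlonglongrightarrow> u 0 + suminf step"
    by (intro tendsto_add tendsto_const summable_LIMSEQ)
  moreover have "u 0 + (\<Sum>k<n. step k) = u n" for n
    unfolding step_def by (simp add: sum_lessThan_telescope)
  ultimately have "u \<longlonglongrightarrow> u 0 + suminf step" by simp
  then have "lim u = h R + suminf step" by (simp add: limI u_def)
  moreover have "suminf step \<le> Cu / 3"
    using suminf_le[OF step_le \<open>summable step\<close>] sums_div_four_pow sums_summable sums_unique
    by metis
  moreover have "- Cl / 3 \<le> suminf step"
    using suminf_le[OF step_ge _ \<open>summable step\<close>] sums_div_four_pow[of "- Cl"] sums_summable sums_unique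
    by metis
  ultimately show "lim (\<lambda>n. h ((f ^^ n) R) / 4 ^ n) \<le> h R + Cu / 3"
    and "h R - Cl / 3 \<le> lim (\<lambda>n. h ((f ^^ n) R) / 4 ^ n)"
    by (simp_all add: u_def[abs_def])
qed

lemma can_h_bounds:
  fixes A B :: int and W :: real
  assumes A: "\<bar>real_of_int A\<bar> \<le> W^2" and B: "\<bar>real_of_int B\<bar> \<le> W^3" and W: "1 \<le> W"
    and disc: "4*A^3 + 27*B^2 \<noteq> 0" and R: "on_curve A B R"
  shows "can_h A R \<le> pt_h R + ln (12 * W^4) / 3"
    and "pt_h R - ln (1000 * W^10) / 3 \<le> can_h A R"
  using quasi_quadratic_limit_bounds[where C = "on_curve A B" and f = "\<lambda>S. ec_add A S S" and h = pt_h,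
      OF on_curve_ec_add_self pt_h_ec_add_self_bounds(1)[OF A B W disc]
      pt_h_ec_add_self_bounds(2)[OF A B W disc] R]
  by (simp_all add: can_h_def)

section \<open>Adding points with a common denominator\<close>

lemma rat_square_of_int_imp_of_int:
  fixes q :: rat
  assumes "q^2 = of_int k"
  obtains t where "q = of_int t"
proof -
  obtain n e where qd: "quotient_of q = (n, e)" by (cases "quotient_of q")
  have "e > 0" "coprime n e" "q = of_int n / of_int e"
    using quotient_of_denom_pos[OF qd] quotient_of_coprime[OF qd] quotient_of_div[OF qd] .
  then have "(of_int n / of_int e :: rat)^2 = of_int k" using assms by simp
  then have "(of_int (n^2) :: rat) = of_int (k * e^2)"
    using \<open>e > 0\<close> by (simp add: power_divide field_simps)
  then have "e^2 dvd n^2" by (simp only: of_int_eq_iff) simp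
  moreover have "coprime (n^2) (e^2)" using \<open>coprime n e\<close> by simp
  ultimately have "is_unit (e^2)" by (meson coprime_common_divisor dvd_refl)
  then have "e = 1" using \<open>e > 0\<close> by (simp add: power2_eq_1_iff)
  then show ?thesis using that \<open>q = of_int n / of_int e\<close> by simp
qed

lemma ec_add_common_denominator:
  fixes A B x1 x2 s :: int and yP yQ :: rat
  assumes P: "on_curve A B (Some (of_int x1 / of_int s, yP))"
    and Q: "on_curve A B (Some (of_int x2 / of_int s, yQ))"
    and "s > 0" "x1 \<noteq> x2"
  obtains T y where
    "T^2 = (x1^3 + A*x1*s^2 + B*s^3) * (x2^3 + A*x2*s^2 + B*s^3)"
    "ec_add A (Some (of_int x1 / of_int s, yP)) (Some (of_int x2 / of_int s, yQ))
       = Some (of_int ((x1 + x2)*x1*x2 + A*s^2*(x1 + x2) + 2*B*s^3 - 2*T) / of_int (s*(x2 - x1)^2), y)"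
proof -
  define xP xQ where "xP = (of_int x1 / of_int s :: rat)" and "xQ = (of_int x2 / of_int s :: rat)"
  have "(of_int s :: rat) \<noteq> 0" using \<open>s > 0\<close> by simp
  then have x1: "of_int x1 = xP * of_int s" and x2: "of_int x2 = xQ * of_int s" and "xP \<noteq> xQ"
    using \<open>x1 \<noteq> x2\<close> by (simp_all add: xP_def xQ_def)
  have cP: "yP^2 = xP^3 + of_int A * xP + of_int B" and cQ: "yQ^2 = xQ^3 + of_int A * xQ + of_int B"
    using P Q by (simp_all add: on_curve_def xP_def xQ_def)
  define t where "t = (of_int s)^3 * yP * yQ"
  have "t^2 = of_int ((x1^3 + A*x1*s^2 + B*s^3) * (x2^3 + A*x2*s^2 + B*s^3))"
    unfolding of_int_mult of_int_add of_int_power x1 x2 t_def of_int_of_nat_eq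
    by (simp add: cP cQ power_mult_distrib) algebra
  then obtain T where T: "t = of_int T" by (rule rat_square_of_int_imp_of_int)
  define l where "l = (yQ - yP) / (xQ - xP)"
  have "l * (xQ - xP) = yQ - yP" using \<open>xP \<noteq> xQ\<close> by (simp add: l_def)
  then have "(l^2 - xP - xQ) * of_int (s*(x2 - x1)^2)
      = of_int ((x1 + x2)*x1*x2 + A*s^2*(x1 + x2) + 2*B*s^3 - 2*T)"
    unfolding of_int_mult of_int_add of_int_diff of_int_power x1 x2 T[symmetric]
    using cP cQ by (simp add: t_def) algebra
  moreover have "of_int (s*(x2 - x1)^2) \<noteq> (0::rat)" using \<open>s > 0\<close> \<open>x1 \<noteq> x2\<close> by simp
  ultimately have "l^2 - xP - xQ = of_int ((x1 + x2)*x1*x2 + A*s^2*(x1 + x2) + 2*B*s^3 - 2*T)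
                                   / of_int (s*(x2 - x1)^2)"
    by (simp add: eq_divide_eq)
  moreover have "T^2 = (x1^3 + A*x1*s^2 + B*s^3) * (x2^3 + A*x2*s^2 + B*s^3)"
  proof -
    have "(of_int (T^2) :: rat) = of_int ((x1^3 + A*x1*s^2 + B*s^3) * (x2^3 + A*x2*s^2 + B*s^3))"
      using \<open>t^2 = _\<close> by (simp only: T of_int_power)
    then show ?thesis by (simp only: of_int_eq_iff)
  qed
  moreover have "ec_add A (Some (xP, yP)) (Some (xQ, yQ))
      = Some (l^2 - xP - xQ, l * (xP - (l^2 - xP - xQ)) - yP)"
    using \<open>xP \<noteq> xQ\<close> by (simp add: ec_add_Some_Some Let_def l_def)
  ultimately show ?thesis
    using that[of T "l * (xP - (l^2 - xP - xQ)) - yP"] unfolding xP_def xQ_def by simp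
qed

lemma abs_cubic_value_le:
  fixes A B s x :: real
  assumes "0 \<le> x" "0 \<le> s" "\<bar>A\<bar> * s^2 \<le> x^2" "\<bar>B\<bar> * s^3 \<le> x^3"
  shows "\<bar>x^3 + A*x*s^2 + B*s^3\<bar> \<le> 3 * x^3"
proof -
  have "\<bar>A*x*s^2\<bar> = (\<bar>A\<bar> * s^2) * x" using assms(1) by (simp add: abs_mult)
  also have "\<dots> \<le> x^2 * x" using assms(1,3) by (rule mult_right_mono[rotated])
  finally have "\<bar>A*x*s^2\<bar> \<le> x^3" by (simp add: power2_eq_square power3_eq_cube)
  moreover have "\<bar>B*s^3\<bar> \<le> x^3" using assms(2,4) by (simp add: abs_mult)
  ultimately show ?thesis using assms(1) by (simp add: abs_le_iff)
qed

lemma abs_coeffs_scaled_le: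
  fixes A B W S X :: real
  assumes A: "\<bar>A\<bar> \<le> W^2" and B: "\<bar>B\<bar> \<le> W^3" and "0 \<le> S" "0 \<le> W" and WS: "W * S \<le> X"
  shows "\<bar>A\<bar> * S^2 \<le> X^2" and "\<bar>B\<bar> * S^3 \<le> X^3"
proof -
  have "0 \<le> W * S" using \<open>0 \<le> S\<close> \<open>0 \<le> W\<close> by simp
  have "\<bar>A\<bar> * S^2 \<le> (W * S)^2"
    using mult_right_mono[OF A, of "S^2"] by (simp add: power_mult_distrib)
  also have "\<dots> \<le> X^2" using power_mono[OF WS \<open>0 \<le> W * S\<close>] .
  finally show "\<bar>A\<bar> * S^2 \<le> X^2" .
  have "\<bar>B\<bar> * S^3 \<le> (W * S)^3"
    using mult_right_mono[OF B, of "S^3"] \<open>0 \<le> S\<close> by (simp add: power_mult_distrib)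
  also have "\<dots> \<le> X^3" using power_mono[OF WS \<open>0 \<le> W * S\<close>] .
  finally show "\<bar>B\<bar> * S^3 \<le> X^3" .
qed

lemma abs_chord_numerator_le:
  fixes A B s x1 x2 T :: real
  assumes "0 \<le> s" "0 < x1" "x1 < x2" and A: "\<bar>A\<bar> * s^2 \<le> x1^2" and B: "\<bar>B\<bar> * s^3 \<le> x1^3"
    and T: "T^2 = (x1^3 + A*x1*s^2 + B*s^3) * (x2^3 + A*x2*s^2 + B*s^3)"
  shows "\<bar>(x1 + x2)*x1*x2 + A*s^2*(x1 + x2) + 2*B*s^3 - 2*T\<bar> \<le> 12 * x1 * x2^2"
proof -
  have "x1^2 \<le> x2^2" "x1^3 \<le> x2^3" using assms(2,3) by (simp_all add: power_mono)
  have "x1^3 \<le> x1 * x2^2" "(x1 + x2)*x1*x2 \<le> 2 * x1 * x2^2"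
    using assms(2,3) mult_left_mono[OF \<open>x1^2 \<le> x2^2\<close>, of x1] mult_left_mono[of x1 x2 "x1 * x2"]
    by (simp_all add: power2_eq_square power3_eq_cube algebra_simps)
  have "x1^2 \<le> x1 * x2" using assms(2,3) by (simp add: power2_eq_square)
  then have "x1^2 * (x1 + x2) \<le> (x1 * x2) * (x2 + x2)" using assms(2,3) by (intro mult_mono) auto
  then have "x1^2 * (x1 + x2) \<le> 2 * x1 * x2^2" by (simp add: power2_eq_square algebra_simps)
  have N1: "\<bar>x1^3 + A*x1*s^2 + B*s^3\<bar> \<le> 3 * x1^3"
    using assms(1,2) A B by (intro abs_cubic_value_le) auto
  have N2: "\<bar>x2^3 + A*x2*s^2 + B*s^3\<bar> \<le> 3 * x2^3"
    using assms(1,2,3) order_trans[OF A \<open>x1^2 \<le> x2^2\<close>] order_trans[OF B \<open>x1^3 \<le> x2^3\<close>]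
    by (intro abs_cubic_value_le) auto
  have "\<bar>T\<bar>^2 = \<bar>x1^3 + A*x1*s^2 + B*s^3\<bar> * \<bar>x2^3 + A*x2*s^2 + B*s^3\<bar>"
    by (metis T abs_mult abs_power2 power2_abs)
  also have "\<dots> \<le> (3 * x1^3) * (3 * x2^3)"
    using N1 N2 assms(2,3) by (intro mult_mono) auto
  also have "\<dots> = 9 * (x1^2 * x2^3) * x1" by algebra
  also have "\<dots> \<le> 9 * (x1^2 * x2^3) * x2"
    using assms(2,3) by (simp add: mult_left_mono less_imp_le)
  also have "\<dots> = (3 * x1 * x2^2)^2" by algebra
  finally have "\<bar>T\<bar> \<le> 3 * x1 * x2^2"
    by (rule power2_le_imp_le) (use assms(2) in simp)
  moreover have "\<bar>A*s^2*(x1 + x2)\<bar> \<le> x1^2 * (x1 + x2)"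
  proof -
    have "\<bar>A*s^2*(x1 + x2)\<bar> = (\<bar>A\<bar> * s^2) * (x1 + x2)" using assms(2,3) by (simp add: abs_mult)
    also have "\<dots> \<le> x1^2 * (x1 + x2)" using A assms(2,3) by (intro mult_right_mono) auto
    finally show ?thesis .
  qed
  moreover have "\<bar>B*s^3\<bar> \<le> x1^3" using B assms(1) by (simp add: abs_mult)
  moreover have "0 \<le> (x1 + x2)*x1*x2" using assms(2,3) by simp
  moreover have "(x1 + x2)*x1*x2 + A*s^2*(x1 + x2) + 2*B*s^3 - 2*T
      = (x1 + x2)*x1*x2 + A*s^2*(x1 + x2) + 2*(B*s^3) - 2*T" by simp
  ultimately show ?thesis
    using \<open>x1^3 \<le> x1 * x2^2\<close> \<open>x1^2 * (x1 + x2) \<le> 2 * x1 * x2^2\<close> \<open>(x1 + x2)*x1*x2 \<le> 2 * x1 * x2^2\<close>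
    unfolding abs_le_iff by linarith
qed

lemma pt_h_ec_add_le:
  fixes A B x1 x2 s :: int and yP yQ :: rat and W :: real
  assumes P: "on_curve A B (Some (of_int x1 / of_int s, yP))"
    and Q: "on_curve A B (Some (of_int x2 / of_int s, yQ))"
    and "s > 0" and A: "\<bar>real_of_int A\<bar> \<le> W^2" and B: "\<bar>real_of_int B\<bar> \<le> W^3" and "1 \<le> W"
    and Ws: "W * real_of_int s \<le> real_of_int x1" and "x1 < x2"
  shows "pt_h (ec_add A (Some (of_int x1 / of_int s, yP)) (Some (of_int x2 / of_int s, yQ)))
           \<le> ln 12 + ln (real_of_int x1) + 2 * ln (real_of_int x2)"
proof -
  obtain T y where T: "T^2 = (x1^3 + A*x1*s^2 + B*s^3) * (x2^3 + A*x2*s^2 + B*s^3)"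
    and sum: "ec_add A (Some (of_int x1 / of_int s, yP)) (Some (of_int x2 / of_int s, yQ))
       = Some (of_int ((x1 + x2)*x1*x2 + A*s^2*(x1 + x2) + 2*B*s^3 - 2*T) / of_int (s*(x2 - x1)^2), y)"
    using ec_add_common_denominator[OF P Q \<open>s > 0\<close>] \<open>x1 < x2\<close> by blast
  define N D where "N = (x1 + x2)*x1*x2 + A*s^2*(x1 + x2) + 2*B*s^3 - 2*T" and "D = s*(x2 - x1)^2"
  have "D > 0" using \<open>s > 0\<close> \<open>x1 < x2\<close> by (simp add: D_def)
  define S X1 X2 where "S = real_of_int s" and "X1 = real_of_int x1" and "X2 = real_of_int x2"
  have "0 < S" "X1 < X2" using \<open>s > 0\<close> \<open>x1 < x2\<close> by (simp_all add: S_def X1_def X2_def)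
  have WS: "W * S \<le> X1" using Ws by (simp add: S_def X1_def)
  have "S \<le> W * S" using mult_right_mono[OF \<open>1 \<le> W\<close>, of S] \<open>0 < S\<close> by simp
  then have "S \<le> X1" using WS by linarith
  note AS_BS = abs_coeffs_scaled_le[OF A B less_imp_le[OF \<open>0 < S\<close>] order_trans[OF zero_le_one \<open>1 \<le> W\<close>] WS]
  have "(real_of_int T)^2 = (X1^3 + real_of_int A * X1 * S^2 + real_of_int B * S^3)
      * (X2^3 + real_of_int A * X2 * S^2 + real_of_int B * S^3)"
    using arg_cong[OF T, of real_of_int] by (simp add: S_def X1_def X2_def)
  from abs_chord_numerator_le[OF _ _ \<open>X1 < X2\<close> AS_BS this]
  have "\<bar>real_of_int N\<bar> \<le> 12 * X1 * X2^2"
    using \<open>0 < S\<close> \<open>S \<le> X1\<close> \<open>1 \<le> W\<close> by (simp add: N_def S_def X1_def X2_def)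
  moreover have "real_of_int D \<le> 12 * X1 * X2^2"
  proof -
    have "real_of_int D = S * (X2 - X1)^2" by (simp add: D_def S_def X1_def X2_def)
    also have "\<dots> \<le> X1 * X2^2"
      using \<open>S \<le> X1\<close> \<open>0 < S\<close> \<open>X1 < X2\<close> by (intro mult_mono power_mono) auto
    also have "\<dots> \<le> 12 * X1 * X2^2"
      using \<open>0 < S\<close> \<open>S \<le> X1\<close> by simp
    finally show ?thesis .
  qed
  ultimately have "ln (real_of_int (max \<bar>N\<bar> \<bar>D\<bar>)) \<le> ln (12 * X1 * X2^2)"
    using \<open>D > 0\<close> by (intro ln_mono) auto
  also have "\<dots> = ln 12 + ln X1 + 2 * ln X2"
    using \<open>0 < S\<close> \<open>S \<le> X1\<close> \<open>X1 < X2\<close> by (simp add: ln_mult ln_realpow)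
  moreover have "pt_h (ec_add A (Some (of_int x1 / of_int s, yP)) (Some (of_int x2 / of_int s, yQ)))
      = weil_h (of_int N / of_int D)"
    by (simp only: sum pt_h_def N_def D_def option.case prod.case)
  ultimately show ?thesis
    using weil_h_of_int_div_le[of D N] \<open>D > 0\<close> by (simp add: X1_def X2_def)
qed

lemma can_h_ec_add_excess_le:
  fixes A B x1 x2 s :: int and yP yQ :: rat and W \<delta> :: real
  defines "P \<equiv> Some (of_int x1 / of_int s, yP)" and "Q \<equiv> Some (of_int x2 / of_int s, yQ)"
  assumes A: "\<bar>real_of_int A\<bar> \<le> W^2" and B: "\<bar>real_of_int B\<bar> \<le> W^3" and W: "1 \<le> W"
    and disc: "4*A^3 + 27*B^2 \<noteq> 0" and P: "on_curve A B P" and Q: "on_curve A B Q"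
    and "0 < s" and Ws: "W * real_of_int s \<le> real_of_int x1" and "x1 < x2"
    and gcd1: "real_of_int (gcd x1 s) \<le> real_of_int s powr \<delta>"
    and gcd2: "real_of_int (gcd x2 s) \<le> real_of_int s powr \<delta>"
  shows "can_h A (ec_add A P Q) - can_h A P - can_h A Q
           \<le> can_h A Q + ln 12 + ln (12 * W^4) / 3 + ln (1000 * W^10) + 3 * \<delta> * ln (real_of_int s)"
proof -
  have "(of_int x1 / of_int s :: rat) \<noteq> of_int x2 / of_int s" using \<open>0 < s\<close> \<open>x1 < x2\<close> by simp
  with P Q have "on_curve A B (ec_add A P Q)" unfolding P_def Q_def by (rule on_curve_ec_add)
  have "real_of_int s \<le> W * real_of_int s" using W \<open>0 < s\<close> by simp
  then have "s \<le> x1" using Ws by linarith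
  have "ln (real_of_int x1) \<le> pt_h P + \<delta> * ln (real_of_int s)"
    using ln_numerator_le_weil_h[OF \<open>0 < s\<close> \<open>s \<le> x1\<close> gcd1] by (simp add: P_def pt_h_def)
  moreover have "ln (real_of_int x2) \<le> pt_h Q + \<delta> * ln (real_of_int s)"
    using ln_numerator_le_weil_h[OF \<open>0 < s\<close> _ gcd2] \<open>s \<le> x1\<close> \<open>x1 < x2\<close> by (simp add: Q_def pt_h_def)
  moreover have "pt_h (ec_add A P Q) \<le> ln 12 + ln (real_of_int x1) + 2 * ln (real_of_int x2)"
    unfolding P_def Q_def using P Q \<open>0 < s\<close> A B W Ws \<open>x1 < x2\<close>
    unfolding P_def Q_def by (rule pt_h_ec_add_le)
  ultimately show ?thesis
    using can_h_bounds(1)[OF A B W disc \<open>on_curve A B (ec_add A P Q)\<close>]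
      can_h_bounds(2)[OF A B W disc P] can_h_bounds(2)[OF A B W disc Q]
    by linarith
qed

lemma cos_quotient_le:
  fixes p q h L M \<alpha> K :: real
  assumes p: "M * L < p" and q: "M * L < q" and "0 < M" "0 < L"
    and ratio: "max (q / p) (p / q) \<le> \<alpha>" and excess: "h - p - q \<le> q + K * L" and "0 \<le> K"
  shows "(h - p - q) / (2 * sqrt (p * q)) \<le> sqrt \<alpha> / 2 + K / (2 * M)"
proof -
  have "0 < M * L" using \<open>0 < M\<close> \<open>0 < L\<close> by simp
  then have "0 < p" "0 < q" using p q by linarith+
  define r where "r = sqrt (p * q)"
  have "q^2 \<le> \<alpha> * (p * q)"
    using ratio \<open>0 < p\<close> \<open>0 < q\<close> by (simp add: pos_divide_le_eq power2_eq_square mult_right_mono)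
  then have "q \<le> sqrt \<alpha> * r"
    using \<open>0 < q\<close> real_sqrt_le_mono by (fastforce simp: r_def real_sqrt_mult)
  have "(M * L)^2 < p * q"
    using p q \<open>0 < M * L\<close> by (simp add: power2_eq_square mult_strict_mono)
  then have "M * L < r" using \<open>0 < M * L\<close> real_less_rsqrt by (simp add: r_def)
  then have "K * L \<le> K * r / M"
    using \<open>0 < M\<close> \<open>0 \<le> K\<close> by (simp add: field_simps mult_left_mono)
  then have "h - p - q \<le> (sqrt \<alpha> + K / M) * r"
    using excess \<open>q \<le> sqrt \<alpha> * r\<close> by (simp add: algebra_simps)
  moreover have "0 < r" using \<open>0 < p\<close> \<open>0 < q\<close> by (simp add: r_def)
  ultimately show ?thesis
    using \<open>0 < M\<close> by (simp add: r_def[symmetric] divide_le_eq field_simps)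
qed

lemma abs_coeffs_le_sixth_root:
  fixes A B :: int
  defines "X \<equiv> real_of_int (max (\<bar>A\<bar>^3) (B^2))"
  shows "\<bar>real_of_int A\<bar> \<le> (X powr (1/6))^2" and "\<bar>real_of_int B\<bar> \<le> (X powr (1/6))^3"
proof -
  define W where "W = X powr (1/6)"
  have "0 \<le> X" by (simp add: X_def le_max_iff_disj)
  have W6: "W^6 = X"
  proof (cases "X = 0")
    case False
    then show ?thesis using \<open>0 \<le> X\<close> by (simp add: W_def powr_power)
  qed (simp add: W_def)
  have "\<bar>real_of_int A\<bar>^3 \<le> X" "\<bar>real_of_int B\<bar>^2 \<le> X"
    unfolding X_def by (simp_all flip: of_int_abs of_int_power add: of_int_le_iff)
  then have "\<bar>real_of_int A\<bar>^3 \<le> (W^2)^3" "\<bar>real_of_int B\<bar>^2 \<le> (W^3)^2"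
    using W6 by (simp_all flip: power_mult)
  moreover have "0 \<le> W" by (simp add: W_def)
  ultimately have "\<bar>real_of_int A\<bar> \<le> W^2" "\<bar>real_of_int B\<bar> \<le> W^3"
    by (auto intro: power_le_imp_le_base[where n = 2] power2_le_imp_le)
  then show "\<bar>real_of_int A\<bar> \<le> (X powr (1/6))^2" and "\<bar>real_of_int B\<bar> \<le> (X powr (1/6))^3"
    by (simp_all add: W_def)
qed

lemma short_weierstrass_disc:
  fixes a1 a2 a3 a4 a6 :: int
  shows "4*(-27 * wc4 a1 a2 a3 a4 a6)^3 + 27*(-54 * wc6 a1 a2 a3 a4 a6)^2
           = - (2^8 * 3^12) * wdisc a1 a2 a3 a4 a6"
  unfolding wc4_def wc6_def wdisc_def wb2_def wb4_def wb6_def wb8_def by algebra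

lemma global_minimal_short_disc_nonzero:
  assumes "global_minimal a1 a2 a3 a4 a6"
  shows "4*(-27 * wc4 a1 a2 a3 a4 a6)^3 + 27*(-54 * wc6 a1 a2 a3 a4 a6)^2 \<noteq> 0"
  using assms unfolding global_minimal_def short_weierstrass_disc by simp

lemma cos_theta_le:
  fixes A B x1 x2 s :: int and yP yQ :: rat and \<delta> \<gamma> M \<alpha> :: real
  defines "X \<equiv> real_of_int (max (\<bar>A\<bar>^3) (B^2))"
    and "P \<equiv> Some (of_int x1 / of_int s, yP)" and "Q \<equiv> Some (of_int x2 / of_int s, yQ)"
  assumes "0 \<le> \<delta>" "0 < \<gamma>" "0 < M"
    and disc: "4*A^3 + 27*B^2 \<noteq> 0" and large: "exp (9 * ln 1000 + 12 * ln 12) \<le> X"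
    and P: "on_curve A B P" and Q: "on_curve A B Q" and "0 < s"
    and x1: "X powr (1/6) \<le> real_of_int x1 / real_of_int s"
    and x2: "real_of_int x1 / real_of_int s < real_of_int x2 / real_of_int s"
    and gcd1: "real_of_int (gcd x1 s) \<le> real_of_int s powr \<delta>"
    and gcd2: "real_of_int (gcd x2 s) \<le> real_of_int s powr \<delta>"
    and s: "weil_h (of_int s) \<le> (1 / \<gamma>) * ln X"
    and hP: "can_h A P > M * ln X" and hQ: "can_h A Q > M * ln X"
    and ratio: "max (can_h A Q / can_h A P) (can_h A P / can_h A Q) \<le> \<alpha>"
  shows "cos_theta A P Q \<le> sqrt \<alpha> / 2 + 3 * \<delta> / (2 * M * \<gamma>) + 1 / M"
proof -
  define L W where "L = ln X" and "W = X powr (1/6)"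
  have "1 \<le> exp (9 * ln 1000 + 12 * ln (12::real))" by simp
  then have "1 \<le> X" "0 < X" using large by linarith+
  have L: "9 * ln 1000 + 12 * ln 12 \<le> L"
    unfolding L_def using ln_mono[OF large] by simp
  have "0 < ln (1000::real)" "0 < ln (12::real)" by simp_all
  with L have "0 < L" by linarith
  have "1 \<le> W" using \<open>1 \<le> X\<close> by (simp add: W_def ge_one_powr_ge_zero)
  have lnW: "ln W = L / 6" using \<open>0 < X\<close> by (simp add: W_def L_def ln_powr)
  have "W * real_of_int s \<le> real_of_int x1" "x1 < x2"
    using x1 x2 \<open>0 < s\<close> by (simp_all add: W_def pos_le_divide_eq divide_less_cancel)
  have "ln (real_of_int s) \<le> L / \<gamma>" using s weil_h_of_int[OF \<open>0 < s\<close>] by (simp add: L_def)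
  then have "3 * \<delta> * ln (real_of_int s) \<le> 3 * \<delta> * (L / \<gamma>)"
    using \<open>0 \<le> \<delta>\<close> by (intro mult_left_mono) simp_all
  moreover have "ln (12 * W^4) / 3 + ln (1000 * W^10) = ln 12 / 3 + ln 1000 + 17 / 9 * L"
    using \<open>1 \<le> W\<close> by (simp add: ln_mult ln_realpow lnW field_simps)
  \<comment> \<open>The threshold on X is chosen so that ln 1000 + 4/3 ln 12 \<le> L / 9 absorbs the constants.\<close>
  ultimately have "ln 12 + ln (12 * W^4) / 3 + ln (1000 * W^10) + 3 * \<delta> * ln (real_of_int s)
      \<le> (2 + 3 * \<delta> / \<gamma>) * L"
    using L by (simp add: algebra_simps)
  with can_h_ec_add_excess_le[OF abs_coeffs_le_sixth_root[where A = A and B = B, folded X_def W_def]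
      \<open>1 \<le> W\<close> disc P[unfolded P_def] Q[unfolded Q_def] \<open>0 < s\<close>
      \<open>W * real_of_int s \<le> real_of_int x1\<close> \<open>x1 < x2\<close> gcd1 gcd2]
  have "can_h A (ec_add A P Q) - can_h A P - can_h A Q \<le> can_h A Q + (2 + 3 * \<delta> / \<gamma>) * L"
    by (simp add: P_def Q_def)
  moreover have "0 \<le> 2 + 3 * \<delta> / \<gamma>" using \<open>0 \<le> \<delta>\<close> \<open>0 < \<gamma>\<close> by simp
  ultimately have "cos_theta A P Q \<le> sqrt \<alpha> / 2 + (2 + 3 * \<delta> / \<gamma>) / (2 * M)"
    unfolding cos_theta_def using hP hQ ratio \<open>0 < M\<close> \<open>0 < L\<close>
    by (intro cos_quotient_le) (simp_all add: L_def)
  also have "\<dots> = sqrt \<alpha> / 2 + 3 * \<delta> / (2 * M * \<gamma>) + 1 / M"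
    using \<open>0 < M\<close> \<open>0 < \<gamma>\<close> by (simp add: field_simps)
  finally show ?thesis .
qed

theorem theorem3p5:
  fixes \<delta> \<gamma> M \<alpha> :: real
  assumes "0 \<le> \<delta>" "\<delta> \<le> 1" "\<gamma> > 0" "M > 0" "\<alpha> > 1"
  shows "\<exists>X0 :: real. \<forall>(a1::int) a2 a3 a4 a6 (A::int) (B::int) (x1::int) (x2::int) (s::int)
            (yP::rat) (yQ::rat).
     global_minimal a1 a2 a3 a4 a6 \<longrightarrow>
     A = -27 * wc4 a1 a2 a3 a4 a6 \<longrightarrow>
     B = -54 * wc6 a1 a2 a3 a4 a6 \<longrightarrow>
     (let X = real_of_int (max (\<bar>A\<bar>^3) (B^2));
          P = Some (of_int x1 / of_int s, yP);
          Q = Some (of_int x2 / of_int s, yQ)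
      in X \<ge> X0 \<longrightarrow>
         on_curve A B P \<longrightarrow> on_curve A B Q \<longrightarrow>
         s > 0 \<longrightarrow>
         X powr (1/6) \<le> real_of_int x1 / real_of_int s \<longrightarrow>
         real_of_int x1 / real_of_int s < real_of_int x2 / real_of_int s \<longrightarrow>
         real_of_int (gcd x1 s) \<le> real_of_int s powr \<delta> \<longrightarrow>
         real_of_int (gcd x2 s) \<le> real_of_int s powr \<delta> \<longrightarrow>
         weil_h (of_int s) \<le> (1 / \<gamma>) * ln X \<longrightarrow>
         can_h A P > M * ln X \<longrightarrow>
         can_h A Q > M * ln X \<longrightarrow>
         max (can_h A Q / can_h A P) (can_h A P / can_h A Q) \<le> \<alpha> \<longrightarrow>
         cos_theta A P Q \<le> sqrt \<alpha> / 2 + 3 * \<delta> / (2 * M * \<gamma>) + 1 / M)"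
  unfolding Let_def
  by (intro exI[of _ "exp (9 * ln 1000 + 12 * ln 12)"] allI impI cos_theta_le[OF assms(1,3,4)])
    (auto dest: global_minimal_short_disc_nonzero)

end
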